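(* Let $n$ be a positive integer and let $a\in\mathcal{T}_n$ have rank $n-1$. Then $\mu(\mathcal{T}_n^a)=n+1$.
   Context: For a positive integer $m$, $\mathcal{T}_m$ is the semigroup of all functions $\{1,\ldots,m\}\to\{1,\ldots,m\}$ under composition; $\operatorname{rank}(f)=|\operatorname{im}(f)|$. For a semigroup $S$ and $a\in S$, the variant $S^a$ is the set $S$ with operation $x\star_a y=xay$. For a finite semigroup $S$, the minimal degree $\mu(S)$ is the least positive integer $m$ such that $S$ embeds (via an injective homomorphism) in $\mathcal{T}_m$. *)

theory Defs
  imports "HOL-Library.FuncSet"
begin

definition Tfull :: "nat \<Rightarrow> (nat \<Rightarrow> nat) set" where
  "Tfull m = {1..m} \<rightarrow>\<^sub>E {1..m}"

definition tcomp :: "nat \<Rightarrow> (nat \<Rightarrow> nat) \<Rightarrow> (nat \<Rightarrow> nat) \<Rightarrow> (nat \<Rightarrow> nat)" where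
  "tcomp m f g = restrict (f \<circ> g) {1..m}"

definition trank :: "nat \<Rightarrow> (nat \<Rightarrow> nat) \<Rightarrow> nat" where
  "trank m f = card (f ` {1..m})"

definition variant_mult :: "nat \<Rightarrow> (nat \<Rightarrow> nat) \<Rightarrow> (nat \<Rightarrow> nat) \<Rightarrow> (nat \<Rightarrow> nat) \<Rightarrow> (nat \<Rightarrow> nat)" where
  "variant_mult m a x y = tcomp m (tcomp m x a) y"

definition embeds_in_T :: "'a set \<Rightarrow> ('a \<Rightarrow> 'a \<Rightarrow> 'a) \<Rightarrow> nat \<Rightarrow> bool" where
  "embeds_in_T S mult m \<longleftrightarrow>
     (\<exists>\<phi>. inj_on \<phi> S \<and> \<phi> ` S \<subseteq> Tfull m \<and>
          (\<forall>x\<in>S. \<forall>y\<in>S. \<phi> (mult x y) = tcomp m (\<phi> x) (\<phi> y)))"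

definition min_degree :: "'a set \<Rightarrow> ('a \<Rightarrow> 'a \<Rightarrow> 'a) \<Rightarrow> nat" where
  "min_degree S mult = (LEAST m. 0 < m \<and> embeds_in_T S mult m)"

end

theory Submission
  imports Defs
begin

text \<open>
  Upper bound: if p is the point missing from the image of a, then x is recovered from the
  values x (a i) together with x p, and sending x to the map i \<mapsto> x (a i), n + 1 \<mapsto> x p
  turns x a y into composition. Lower bound: by counting, an embedding into T_m with m \<le> n
  is onto T_n, so T_n^a would have a left identity e; then e a y = y for y the identity,
  so a is injective, contradicting rank n - 1.
\<close>

lemma finite_Tfull: "finite (Tfull m)"
  unfolding Tfull_def by (simp add: finite_PiE)

lemma card_Tfull: "card (Tfull m) = m ^ m"
  unfolding Tfull_def by (simp add: card_PiE)

lemma Tfull_apply: "f \<in> Tfull m \<Longrightarrow> i \<in> {1..m} \<Longrightarrow> f i \<in> {1..m}"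
  unfolding Tfull_def by auto

lemma tcomp_closed: "f \<in> Tfull m \<Longrightarrow> g \<in> Tfull m \<Longrightarrow> tcomp m f g \<in> Tfull m"
  unfolding Tfull_def tcomp_def by (auto simp: PiE_def Pi_def)

lemma variant_mult_closed:
  "a \<in> Tfull m \<Longrightarrow> x \<in> Tfull m \<Longrightarrow> y \<in> Tfull m \<Longrightarrow> variant_mult m a x y \<in> Tfull m"
  unfolding variant_mult_def by (simp add: tcomp_closed)

lemma variant_mult_apply:
  assumes "a \<in> Tfull m" "x \<in> Tfull m" "y \<in> Tfull m" "i \<in> {1..m}"
  shows "variant_mult m a x y i = x (a (y i))"
  using assms Tfull_apply[of y m i] Tfull_apply[of a m "y i"]
  unfolding variant_mult_def tcomp_def by simp

definition Tid :: "nat \<Rightarrow> nat \<Rightarrow> nat" where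
  "Tid m = restrict id {1..m}"

lemma Tid_in_Tfull: "Tid m \<in> Tfull m"
  unfolding Tid_def Tfull_def by auto

lemma tcomp_Tid_left: "f \<in> Tfull m \<Longrightarrow> tcomp m (Tid m) f = f"
  unfolding Tid_def tcomp_def Tfull_def by (auto simp: PiE_def Pi_def extensional_def)

lemma power_self_strict_mono:
  fixes m n :: nat
  assumes "0 < m" "m < n"
  shows "m ^ m < n ^ n"
proof -
  have "m ^ m < n ^ m" using assms by (simp add: power_strict_mono)
  also have "\<dots> \<le> n ^ n" using assms by (simp add: power_increasing)
  finally show ?thesis .
qed

lemma embedding_into_smaller_Tfull_onto:
  assumes inj: "inj_on \<phi> S" and into: "\<phi> ` S \<subseteq> Tfull m"
    and card: "card S = n ^ n" and "0 < m" "m \<le> n"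
  shows "m = n" and "\<phi> ` S = Tfull n"
proof -
  have card_image: "card (\<phi> ` S) = n ^ n"
    using inj card by (simp add: card_image)
  have "n ^ n \<le> m ^ m"
    using card_mono[OF finite_Tfull into] card_image by (simp add: card_Tfull)
  then show "m = n"
    using power_self_strict_mono[of m n] \<open>0 < m\<close> \<open>m \<le> n\<close> by linarith
  then show "\<phi> ` S = Tfull n"
    using card_subset_eq[OF finite_Tfull into] card_image by (simp add: card_Tfull)
qed

lemma inj_on_if_variant_left_identity:
  assumes "variant_mult n a e (Tid n) = Tid n"
  shows "inj_on a {1..n}"
proof (rule inj_onI)
  fix i j assume i: "i \<in> {1..n}" and j: "j \<in> {1..n}" and "a i = a j"
  then have "variant_mult n a e (Tid n) i = variant_mult n a e (Tid n) j"
    unfolding variant_mult_def tcomp_def Tid_def by simp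
  then show "i = j" using assms i j unfolding Tid_def by simp
qed

lemma inj_on_if_variant_embeds_small:
  assumes a: "a \<in> Tfull n"
    and emb: "embeds_in_T (Tfull n) (variant_mult n a) m" and "0 < m" "m \<le> n"
  shows "inj_on a {1..n}"
proof -
  obtain \<phi> where inj: "inj_on \<phi> (Tfull n)" and into: "\<phi> ` Tfull n \<subseteq> Tfull m"
    and hom: "\<forall>x\<in>Tfull n. \<forall>y\<in>Tfull n. \<phi> (variant_mult n a x y) = tcomp m (\<phi> x) (\<phi> y)"
    using emb unfolding embeds_in_T_def by (elim exE conjE)
  have "m = n" and onto: "\<phi> ` Tfull n = Tfull n"
    using embedding_into_smaller_Tfull_onto[OF inj into card_Tfull \<open>0 < m\<close> \<open>m \<le> n\<close>] by simp_all
  have "Tid n \<in> \<phi> ` Tfull n" using onto Tid_in_Tfull by simp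
  then obtain e where e: "e \<in> Tfull n" "\<phi> e = Tid n" by auto
  have "\<phi> (variant_mult n a e (Tid n)) = tcomp n (Tid n) (\<phi> (Tid n))"
    using hom e Tid_in_Tfull \<open>m = n\<close> by simp
  also have "\<dots> = \<phi> (Tid n)"
    using into Tid_in_Tfull \<open>m = n\<close> by (intro tcomp_Tid_left) auto
  finally have "variant_mult n a e (Tid n) = Tid n"
    by (rule inj_onD[OF inj _ variant_mult_closed[OF a e(1) Tid_in_Tfull] Tid_in_Tfull])
  then show ?thesis by (rule inj_on_if_variant_left_identity)
qed

definition variant_rep :: "nat \<Rightarrow> (nat \<Rightarrow> nat) \<Rightarrow> nat \<Rightarrow> (nat \<Rightarrow> nat) \<Rightarrow> nat \<Rightarrow> nat" where
  "variant_rep n a p x = (\<lambda>i. if i \<in> {1..n} then x (a i) else if i = n + 1 then x p else undefined)"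

lemma variant_rep_low: "i \<in> {1..n} \<Longrightarrow> variant_rep n a p x i = x (a i)"
  by (simp add: variant_rep_def)

lemma variant_rep_top: "variant_rep n a p x (Suc n) = x p"
  by (simp add: variant_rep_def)

lemma variant_rep_out: "i \<notin> {1..n + 1} \<Longrightarrow> variant_rep n a p x i = undefined"
  by (auto simp: variant_rep_def)

lemma variant_rep_in_Tfull:
  assumes a: "a \<in> Tfull n" and p: "p \<in> {1..n}" and x: "x \<in> Tfull n"
  shows "variant_rep n a p x \<in> Tfull (n + 1)"
  unfolding Tfull_def
proof (rule PiE_I)
  fix i assume "i \<in> {1..n + 1}"
  then consider "i \<in> {1..n}" | "i = n + 1" by fastforce
  then show "variant_rep n a p x i \<in> {1..n + 1}"
  proof cases
    case 1
    then show ?thesis using Tfull_apply[OF x Tfull_apply[OF a 1]] by (simp add: variant_rep_low)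
  next
    case 2
    then show ?thesis using Tfull_apply[OF x p] by (simp add: variant_rep_top)
  qed
qed (rule variant_rep_out)

lemma inj_on_variant_rep:
  assumes cover: "{1..n} \<subseteq> insert p (a ` {1..n})"
  shows "inj_on (variant_rep n a p) (Tfull n)"
proof (rule inj_onI)
  fix x y assume x: "x \<in> Tfull n" and y: "y \<in> Tfull n"
    and eq: "variant_rep n a p x = variant_rep n a p y"
  show "x = y"
  proof (rule PiE_ext[OF x[unfolded Tfull_def] y[unfolded Tfull_def]])
    fix j assume "j \<in> {1..n}"
    then consider "j = p" | i where "i \<in> {1..n}" "j = a i"
      using cover by blast
    then show "x j = y j"
    proof cases
      case 1
      then show ?thesis using fun_cong[OF eq, of "n + 1"] by (simp add: variant_rep_top)
    next
      case 2
      then show ?thesis using fun_cong[OF eq, of i] by (simp add: variant_rep_low)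
    qed
  qed
qed

lemma variant_rep_mult:
  assumes a: "a \<in> Tfull n" and p: "p \<in> {1..n}" and x: "x \<in> Tfull n" and y: "y \<in> Tfull n"
  shows "variant_rep n a p (variant_mult n a x y) = tcomp (n + 1) (variant_rep n a p x) (variant_rep n a p y)"
proof
  fix i
  consider "i \<in> {1..n}" | "i = n + 1" | "i \<notin> {1..n + 1}" by fastforce
  then show "variant_rep n a p (variant_mult n a x y) i
    = tcomp (n + 1) (variant_rep n a p x) (variant_rep n a p y) i"
  proof cases
    case 1
    have "a i \<in> {1..n}" using Tfull_apply[OF a 1] .
    moreover have "y (a i) \<in> {1..n}" using Tfull_apply[OF y \<open>a i \<in> {1..n}\<close>] .
    ultimately show ?thesis
      using 1 by (simp add: variant_rep_low tcomp_def variant_mult_apply[OF a x y])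
  next
    case 2
    have "y p \<in> {1..n}" using Tfull_apply[OF y p] .
    then show ?thesis
      using 2 p by (simp add: variant_rep_low variant_rep_top tcomp_def variant_mult_apply[OF a x y])
  next
    case 3
    then show ?thesis by (auto simp: variant_rep_out tcomp_def)
  qed
qed

lemma variant_embeds_Suc:
  assumes "a \<in> Tfull n" and "p \<in> {1..n}" and "{1..n} \<subseteq> insert p (a ` {1..n})"
  shows "embeds_in_T (Tfull n) (variant_mult n a) (n + 1)"
  unfolding embeds_in_T_def
  using inj_on_variant_rep variant_rep_in_Tfull variant_rep_mult assms
  by (intro exI[of _ "variant_rep n a p"]) blast

lemma cover_point_if_trank_pred:
  assumes a: "a \<in> Tfull n" and rank: "trank n a = n - 1" and "0 < n"
  obtains p where "p \<in> {1..n}" "{1..n} \<subseteq> insert p (a ` {1..n})"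
proof -
  have sub: "a ` {1..n} \<subseteq> {1..n}" using a unfolding Tfull_def by auto
  have "a ` {1..n} \<noteq> {1..n}" using rank \<open>0 < n\<close> unfolding trank_def by auto
  then obtain p where p: "p \<in> {1..n}" "p \<notin> a ` {1..n}" using sub by blast
  have "insert p (a ` {1..n}) = {1..n}"
    using p sub rank \<open>0 < n\<close> unfolding trank_def
    by (intro card_subset_eq) (auto simp: finite_subset)
  then show ?thesis using that p(1) by blast
qed

theorem proposition4p3:
  fixes n :: nat and a :: "nat \<Rightarrow> nat"
  assumes "0 < n"
    and "a \<in> Tfull n"
    and "trank n a = n - 1"
  shows "min_degree (Tfull n) (variant_mult n a) = n + 1"
  unfolding min_degree_def
proof (rule Least_equality)
  obtain p where "p \<in> {1..n}" "{1..n} \<subseteq> insert p (a ` {1..n})"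
    using cover_point_if_trank_pred assms by metis
  with \<open>a \<in> Tfull n\<close> show "0 < n + 1 \<and> embeds_in_T (Tfull n) (variant_mult n a) (n + 1)"
    using variant_embeds_Suc by simp
next
  fix m assume m: "0 < m \<and> embeds_in_T (Tfull n) (variant_mult n a) m"
  show "n + 1 \<le> m"
  proof (rule ccontr)
    assume "\<not> n + 1 \<le> m"
    then have "m \<le> n" by simp
    then have "inj_on a {1..n}"
      using inj_on_if_variant_embeds_small[OF \<open>a \<in> Tfull n\<close>] m by blast
    then have "trank n a = n" unfolding trank_def by (simp add: card_image)
    then show False using assms by simp
  qed
qed

end
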